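(* Let $0<\varepsilon<1/4$ and $r=(10/\varepsilon^2)\log(1/\varepsilon)$. Let $G$ be a bipartite graph with at least one edge, and let $H$ be a balanced bipartite subgraph of $G$ with parts $A,B$, $|A|=|B|=m$, that maximizes $\Phi(F)=d_F^{\,r}\,v(F)$ over all balanced bipartite subgraphs $F$ of $G$. Assume $\varepsilon m$ is a positive integer. Then for all $A_1\subseteq A$, $B_1\subseteq B$ with $|A_1|=|B_1|=\varepsilon m$ we have $$d(A_1,B_1)\le d_H\,(1+\varepsilon^2/5).$$
   Context: $\log$ is the natural logarithm; $v(F)$ is the number of vertices of $F$. A bipartite graph is balanced if its two parts have equal size. For disjoint vertex sets $X,Y$, $d(X,Y)=e(X,Y)/(|X|\,|Y|)$ (number of edges between $X$ and $Y$ divided by $|X||Y|$); the density $d_F$ of a bipartite graph $F$ is this quantity for its two parts. *)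

theory Defs
  imports Complex_Main
begin

definition simple_graph :: "'a set \<Rightarrow> ('a \<Rightarrow> 'a \<Rightarrow> bool) \<Rightarrow> bool" where
  "simple_graph V E \<longleftrightarrow> finite V \<and> (\<forall>x y. E x y \<longrightarrow> x \<in> V \<and> y \<in> V \<and> x \<noteq> y \<and> E y x)"

definition bipartite_graph :: "'a set \<Rightarrow> ('a \<Rightarrow> 'a \<Rightarrow> bool) \<Rightarrow> bool" where
  "bipartite_graph V E \<longleftrightarrow> simple_graph V E \<and>
     (\<exists>X Y. X \<inter> Y = {} \<and> X \<union> Y = V \<and>
        (\<forall>x y. E x y \<longrightarrow> (x \<in> X \<and> y \<in> Y) \<or> (x \<in> Y \<and> y \<in> X)))"

definition bip_density :: "('a \<Rightarrow> 'a \<Rightarrow> bool) \<Rightarrow> 'a set \<Rightarrow> 'a set \<Rightarrow> real" where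
  "bip_density E X Y = real (card {(x, y). x \<in> X \<and> y \<in> Y \<and> E x y}) / (real (card X) * real (card Y))"

definition balanced_bip_subgraph ::
  "'a set \<Rightarrow> ('a \<Rightarrow> 'a \<Rightarrow> bool) \<Rightarrow> 'a set \<Rightarrow> 'a set \<Rightarrow> ('a \<Rightarrow> 'a \<Rightarrow> bool) \<Rightarrow> bool" where
  "balanced_bip_subgraph V E X Y F \<longleftrightarrow>
     X \<subseteq> V \<and> Y \<subseteq> V \<and> X \<inter> Y = {} \<and> card X = card Y \<and>
     simple_graph (X \<union> Y) F \<and> (\<forall>x y. F x y \<longrightarrow> E x y) \<and>
     (\<forall>x y. F x y \<longrightarrow> (x \<in> X \<and> y \<in> Y) \<or> (x \<in> Y \<and> y \<in> X))"

definition Phi :: "real \<Rightarrow> 'a set \<Rightarrow> 'a set \<Rightarrow> ('a \<Rightarrow> 'a \<Rightarrow> bool) \<Rightarrow> real" where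
  "Phi r X Y F = bip_density F X Y powr r * real (card (X \<union> Y))"

end

theory Submission
  imports Defs
begin

text \<open>Restricting \<open>H\<close> to \<open>A\<^sub>1 \<union> B\<^sub>1\<close> gives a competitor \<open>F\<close> with \<open>d\<^sub>F = d(A\<^sub>1,B\<^sub>1)\<close> and
  \<open>v(F) = \<epsilon> v(H)\<close>. Maximality of \<open>\<Phi>(H)\<close> yields \<open>d(A\<^sub>1,B\<^sub>1)\<^sup>r \<epsilon> \<le> d\<^sub>H\<^sup>r\<close>, i.e.
  \<open>d(A\<^sub>1,B\<^sub>1) \<le> d\<^sub>H (1/\<epsilon>)\<^bsup>1/r\<^esup> = d\<^sub>H exp(\<epsilon>\<^sup>2/10) \<le> d\<^sub>H (1 + \<epsilon>\<^sup>2/5)\<close>.\<close>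

definition restrict_edges :: "('a \<Rightarrow> 'a \<Rightarrow> bool) \<Rightarrow> 'a set \<Rightarrow> 'a \<Rightarrow> 'a \<Rightarrow> bool" where
  "restrict_edges H S x y \<longleftrightarrow> H x y \<and> x \<in> S \<and> y \<in> S"

lemma balanced_bip_subgraph_restrict_edges:
  assumes "balanced_bip_subgraph V E A B H"
    and "A1 \<subseteq> A" and "B1 \<subseteq> B" and "card A1 = card B1"
  shows "balanced_bip_subgraph V E A1 B1 (restrict_edges H (A1 \<union> B1))"
proof -
  have "finite (A \<union> B)"
    using assms(1) by (simp add: balanced_bip_subgraph_def simple_graph_def)
  then have "finite (A1 \<union> B1)"
    using assms(2,3) by (meson Un_mono finite_subset)
  with assms show ?thesis
    unfolding balanced_bip_subgraph_def simple_graph_def restrict_edges_def by blast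
qed

lemma bip_density_restrict_edges:
  assumes "X \<union> Y \<subseteq> S"
  shows "bip_density (restrict_edges H S) X Y = bip_density H X Y"
proof -
  have "{(x, y). x \<in> X \<and> y \<in> Y \<and> restrict_edges H S x y} = {(x, y). x \<in> X \<and> y \<in> Y \<and> H x y}"
    using assms by (auto simp: restrict_edges_def)
  then show ?thesis
    by (simp add: bip_density_def)
qed

lemma bip_density_nonneg: "0 \<le> bip_density H X Y"
  by (simp add: bip_density_def)

lemma Phi_balanced_bip_subgraph:
  assumes "balanced_bip_subgraph V E X Y F"
  shows "Phi r X Y F = bip_density F X Y powr r * (2 * real (card X))"
proof -
  have "finite X" "finite Y" "X \<inter> Y = {}" "card X = card Y"
    using assms by (auto simp: balanced_bip_subgraph_def simple_graph_def)
  then have "card (X \<union> Y) = 2 * card X"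
    by (simp add: card_Un_disjoint)
  then show ?thesis
    by (simp add: Phi_def)
qed

lemma le_mult_root_if_powr_le:
  fixes x y r a b :: real
  assumes "0 \<le> x" and "0 \<le> y" and "0 < r" and "0 < a"
    and "x powr r * a \<le> y powr r * b"
  shows "x \<le> y * (b / a) powr (1 / r)"
proof (cases "x = 0")
  case True
  then show ?thesis
    using assms(2) by simp
next
  case False
  with assms have "0 < x powr r * a"
    by simp
  with assms(5) have "0 < y powr r * b"
    by linarith
  then have "0 < y" and "0 < b"
    using assms(2) by (auto simp: zero_less_mult_iff)
  have "x powr r \<le> y powr r * (b / a)"
    using assms(4,5) by (simp add: field_simps)
  then have "(x powr r) powr (1 / r) \<le> (y powr r * (b / a)) powr (1 / r)"
    using assms(3) by (intro powr_mono2) auto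
  also have "\<dots> = y * (b / a) powr (1 / r)"
    using assms(3,4) \<open>0 < y\<close> \<open>0 < b\<close> by (subst powr_mult) (simp_all add: powr_powr)
  finally show ?thesis
    using assms(1,3) by (simp add: powr_powr)
qed

lemma inverse_powr_inverse_exponent:
  fixes \<epsilon> r :: real
  assumes "0 < \<epsilon>" and "\<epsilon> < 1" and "r = (10 / \<epsilon>\<^sup>2) * ln (1 / \<epsilon>)"
  shows "(1 / \<epsilon>) powr (1 / r) = exp (\<epsilon>\<^sup>2 / 10)"
proof -
  have "0 < ln (1 / \<epsilon>)"
    using assms(1,2) by simp
  then have "1 / r * ln (1 / \<epsilon>) = \<epsilon>\<^sup>2 / 10"
    using assms(1,3) by simp
  then show ?thesis
    using assms(1) by (simp add: powr_def)
qed

theorem lemma3p3: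
  fixes V :: "'a set" and E H :: "'a \<Rightarrow> 'a \<Rightarrow> bool" and A B :: "'a set"
    and \<epsilon> r :: real and m k :: nat
  assumes "0 < \<epsilon>" and "\<epsilon> < 1/4"
    and "r = (10 / \<epsilon>\<^sup>2) * ln (1 / \<epsilon>)"
    and "bipartite_graph V E" and "\<exists>x y. E x y"
    and "balanced_bip_subgraph V E A B H"
    and "card A = m" and "card B = m"
    and "\<forall>X Y F. balanced_bip_subgraph V E X Y F \<longrightarrow> Phi r X Y F \<le> Phi r A B H"
    and "\<epsilon> * real m = real k" and "k > 0"
  shows "\<forall>A1 B1. A1 \<subseteq> A \<longrightarrow> B1 \<subseteq> B \<longrightarrow> card A1 = k \<longrightarrow> card B1 = k \<longrightarrow>
           bip_density H A1 B1 \<le> bip_density H A B * (1 + \<epsilon>\<^sup>2 / 5)"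
proof (intro allI impI)
  fix A1 B1
  assume "A1 \<subseteq> A" "B1 \<subseteq> B" "card A1 = k" "card B1 = k"
  let ?F = "restrict_edges H (A1 \<union> B1)"
  have F: "balanced_bip_subgraph V E A1 B1 ?F"
    using balanced_bip_subgraph_restrict_edges assms(6) \<open>A1 \<subseteq> A\<close> \<open>B1 \<subseteq> B\<close>
      \<open>card A1 = k\<close> \<open>card B1 = k\<close> by metis
  have "Phi r A1 B1 ?F \<le> Phi r A B H"
    using assms(9) F by blast
  then have maximality:
    "bip_density H A1 B1 powr r * (2 * real k) \<le> bip_density H A B powr r * (2 * real m)"
    using F assms(6,7) \<open>card A1 = k\<close>
    by (simp add: Phi_balanced_bip_subgraph bip_density_restrict_edges)
  moreover have "0 < r"
    using assms(1,2,3) by simp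
  moreover have "2 * real m / (2 * real k) = 1 / \<epsilon>"
    using assms(1,10,11) by (simp add: field_simps)
  ultimately have "bip_density H A1 B1 \<le> bip_density H A B * (1 / \<epsilon>) powr (1 / r)"
    using le_mult_root_if_powr_le[OF bip_density_nonneg bip_density_nonneg _ _ maximality] assms(11)
    by simp
  also have "(1 / \<epsilon>) powr (1 / r) = exp (\<epsilon>\<^sup>2 / 10)"
    using inverse_powr_inverse_exponent assms(1,2,3) by simp
  also have "bip_density H A B * exp (\<epsilon>\<^sup>2 / 10) \<le> bip_density H A B * (1 + \<epsilon>\<^sup>2 / 5)"
    using real_exp_bound_lemma[of "\<epsilon>\<^sup>2 / 10"] assms(1,2) power_le_one[of \<epsilon> 2]
    by (intro mult_left_mono bip_density_nonneg) simp_all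
  finally show "bip_density H A1 B1 \<le> bip_density H A B * (1 + \<epsilon>\<^sup>2 / 5)" .
qed

end
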